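(* Let $(V,b,\mu)$ be a locally finite, weighted, connected graph with $\mu(x)\geq\mu_0$ for all $x\in V$, for some constant $\mu_0>0$, and let $\theta$ be a phase function on it. Fix $x_0\in V$ and, for $n\in\mathbb{Z}_+$, let $\beta_n=\frac{d_{2n}p_{2n}}{\mu_0 n}$ and let $\chi_n$ be the cut-off function defined below. Then for every $u\in\ell^2(V,\mu)$, $$\|P_{\chi_n}[u]\|\leq 2\beta_n\|u\|\qquad\text{and}\qquad \|u\,\Delta\chi_n\|\leq\beta_n\|u\|.$$
   Context: $V$ is a countably infinite set, $\mu\colon V\to(0,\infty)$, and $b\colon V\times V\to[0,\infty)$ satisfies $b(x,y)=b(y,x)$, $b(x,x)=0$, $\deg(x):=\#\{y: b(x,y)>0\}<\infty$; $x\sim y$ means $b(x,y)>0$; connectedness means any two vertices are joined by a finite path of neighbors, and $d(x,y)$ is the combinatorial (path-length) distance; $r(x)=d(x_0,x)$. A phase function is $\theta\colon V\times V\to[-\pi,\pi]$ with $\theta(x,y)=-\theta(y,x)$. $\ell^2(V,\mu)$ is the space of $f\colon V\to\mathbb{C}$ with $\|f\|^2=\sum_x\mu(x)|f(x)|^2<\infty$, inner product $(f,g)=\sum_x\mu(x)f(x)\overline{g(x)}$. $B(x_0,n)=\{x: r(x)\leq n\}$ (plus edges between such vertices), $d_n=\max_{x\in B(x_0,n)}\deg(x)$, $p_n=\max_{x\in B(x_0,n)}\max_{y\in V}b(x,y)$. The Laplacian is $(\Delta\psi)(x)=\frac1{\mu(x)}\sum_y b(x,y)(\psi(x)-\psi(y))$.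 For $u,\psi\in C(V)$, $(P_\psi[u])(x)=\frac{1}{\mu(x)}\sum_{y\in V}b(x,y)(\psi(x)-\psi(y))(u(x)-e^{i\theta(x,y)}u(y))$. The cut-off is $\chi_n(x)=\left(\left(\frac{2n-d(x_0,x)}{n}\right)\vee 0\right)\wedge 1$, where $a\wedge z=\min\{a,z\}$, $a\vee z=\max\{a,z\}$. *)

theory Defs
  imports "HOL-Analysis.Analysis"
begin

fun gwalk :: "('a \<Rightarrow> 'a \<Rightarrow> real) \<Rightarrow> nat \<Rightarrow> 'a \<Rightarrow> 'a \<Rightarrow> bool" where
  "gwalk b 0 x y = (x = y)"
| "gwalk b (Suc n) x y = (\<exists>z. b x z > 0 \<and> gwalk b n z y)"

definition graph_connected :: "('a \<Rightarrow> 'a \<Rightarrow> real) \<Rightarrow> bool" where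
  "graph_connected b = (\<forall>x y. \<exists>n. gwalk b n x y)"

definition gdist :: "('a \<Rightarrow> 'a \<Rightarrow> real) \<Rightarrow> 'a \<Rightarrow> 'a \<Rightarrow> nat" where
  "gdist b x y = (LEAST n. gwalk b n x y)"

definition gdeg :: "('a \<Rightarrow> 'a \<Rightarrow> real) \<Rightarrow> 'a \<Rightarrow> nat" where
  "gdeg b x = card {y. b x y > 0}"

definition gball :: "('a \<Rightarrow> 'a \<Rightarrow> real) \<Rightarrow> 'a \<Rightarrow> nat \<Rightarrow> 'a set" where
  "gball b x0 n = {x. gdist b x0 x \<le> n}"

definition dmax :: "('a \<Rightarrow> 'a \<Rightarrow> real) \<Rightarrow> 'a \<Rightarrow> nat \<Rightarrow> nat" where
  "dmax b x0 n = Max (gdeg b ` gball b x0 n)"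

definition pmax :: "('a \<Rightarrow> 'a \<Rightarrow> real) \<Rightarrow> 'a \<Rightarrow> nat \<Rightarrow> real" where
  "pmax b x0 n = Max ((\<lambda>x. Max (range (b x))) ` gball b x0 n)"

definition l2norm :: "('a \<Rightarrow> real) \<Rightarrow> ('a \<Rightarrow> complex) \<Rightarrow> real" where
  "l2norm \<mu> f = sqrt (\<Sum>\<^sub>\<infinity>x. \<mu> x * (cmod (f x))\<^sup>2)"

definition in_l2 :: "('a \<Rightarrow> real) \<Rightarrow> ('a \<Rightarrow> complex) \<Rightarrow> bool" where
  "in_l2 \<mu> f = ((\<lambda>x. \<mu> x * (cmod (f x))\<^sup>2) summable_on UNIV)"

text \<open>Laplacian (sum over the finitely many neighbours; other terms vanish).\<close>
definition glap :: "('a \<Rightarrow> 'a \<Rightarrow> real) \<Rightarrow> ('a \<Rightarrow> real) \<Rightarrow> ('a \<Rightarrow> real) \<Rightarrow> 'a \<Rightarrow> real" where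
  "glap b \<mu> \<psi> x = (1 / \<mu> x) * (\<Sum>y\<in>{y. b x y > 0}. b x y * (\<psi> x - \<psi> y))"

definition Pop :: "('a \<Rightarrow> 'a \<Rightarrow> real) \<Rightarrow> ('a \<Rightarrow> real) \<Rightarrow> ('a \<Rightarrow> 'a \<Rightarrow> real)
     \<Rightarrow> ('a \<Rightarrow> real) \<Rightarrow> ('a \<Rightarrow> complex) \<Rightarrow> 'a \<Rightarrow> complex" where
  "Pop b \<mu> \<theta> \<psi> u x = complex_of_real (1 / \<mu> x) *
     (\<Sum>y\<in>{y. b x y > 0}. complex_of_real (b x y * (\<psi> x - \<psi> y)) *
        (u x - exp (\<i> * complex_of_real (\<theta> x y)) * u y))"

definition cutoff :: "('a \<Rightarrow> 'a \<Rightarrow> real) \<Rightarrow> 'a \<Rightarrow> nat \<Rightarrow> 'a \<Rightarrow> real" where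
  "cutoff b x0 n x = min (max ((2 * real n - real (gdist b x0 x)) / real n) 0) 1"

end

theory Submission
  imports Defs
begin

text \<open>
  Along an edge the distance to \<open>x0\<close> changes by at most one, so the cut-off \<open>\<chi>\<^sub>n\<close>
  changes by at most \<open>1/n\<close>; and \<open>\<chi>\<^sub>n\<close> vanishes at distance \<open>\<ge> 2n\<close>. Hence
  \<open>P\<^sub>\<chi>[u]\<close> and \<open>\<Delta>\<chi>\<^sub>n\<close> are supported in the finite ball \<open>B(x0,2n)\<close>, where degrees
  are at most \<open>d = d\<^sub>2\<^sub>n\<close> and weights at most \<open>p = p\<^sub>2\<^sub>n\<close>. This gives \<open>|\<Delta>\<chi>\<^sub>n| \<le> \<beta>\<^sub>n\<close>
  pointwise. For \<open>P\<close>, \<open>|P\<^sub>\<chi>[u](x)|\<close> is at most \<open>p/(n \<mu>(x))\<close> times the sum of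
  \<open>|u(x)| + |u(y)|\<close> over the neighbours \<open>y\<close> of \<open>x\<close> with \<open>\<chi>\<^sub>n(y) \<noteq> \<chi>\<^sub>n(x)\<close>; Cauchy-Schwarz
  and double counting over this symmetric relation bound the sum of the squares of these
  sums by \<open>(2d)\<^sup>2 \<Sum> |u|\<^sup>2\<close>, which yields the factor \<open>2\<beta>\<^sub>n\<close>.
\<close>

lemma gwalk_Suc_right: "gwalk b (Suc n) x y \<longleftrightarrow> (\<exists>z. gwalk b n x z \<and> b z y > 0)"
  by (induction n arbitrary: x) auto

lemma gwalk_gdist: "graph_connected b \<Longrightarrow> gwalk b (gdist b x y) x y"
  unfolding gdist_def graph_connected_def by (meson LeastI_ex)

lemma gdist_le: "gwalk b m x y \<Longrightarrow> gdist b x y \<le> m"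
  unfolding gdist_def by (rule Least_le)

lemma gdist_edge_le:
  assumes "graph_connected b" "b x y > 0"
  shows "gdist b x0 y \<le> gdist b x0 x + 1"
proof -
  have "gwalk b (Suc (gdist b x0 x)) x0 y"
    unfolding gwalk_Suc_right using gwalk_gdist[OF assms(1), of x0 x] assms(2) by blast
  then show ?thesis using gdist_le by fastforce
qed

lemma gdist_edge_abs_diff_le:
  assumes "graph_connected b" "\<And>x y. b x y = b y x" "b x y > 0"
  shows "\<bar>real (gdist b x0 x) - real (gdist b x0 y)\<bar> \<le> 1"
proof -
  have "gdist b x0 x \<le> gdist b x0 y + 1"
    using gdist_edge_le[OF assms(1), of y x] assms(2)[of y x] assms(3) by simp
  then show ?thesis using gdist_edge_le[OF assms(1,3), of x0] by linarith
qed

lemma finite_gball: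
  assumes "graph_connected b" "\<And>x. finite {y. b x y > 0}"
  shows "finite (gball b x0 n)"
proof (induction n)
  case 0
  have "gball b x0 0 \<subseteq> {x0}"
  proof
    fix x assume "x \<in> gball b x0 0"
    then show "x \<in> {x0}" using gwalk_gdist[OF assms(1), of x0 x] by (simp add: gball_def)
  qed
  then show ?case using finite_subset by blast
next
  case (Suc n)
  have "gball b x0 (Suc n) \<subseteq> gball b x0 n \<union> (\<Union>z\<in>gball b x0 n. {y. b z y > 0})"
  proof
    fix x assume x: "x \<in> gball b x0 (Suc n)"
    show "x \<in> gball b x0 n \<union> (\<Union>z\<in>gball b x0 n. {y. b z y > 0})"
    proof (cases "gdist b x0 x \<le> n")
      case False
      then have "gwalk b (Suc n) x0 x"
        using x gwalk_gdist[OF assms(1), of x0 x] by (simp add: gball_def le_Suc_eq)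
      then obtain z where "gwalk b n x0 z" "b z x > 0"
        unfolding gwalk_Suc_right by blast
      then show ?thesis using gdist_le[of b n x0 z] by (auto simp: gball_def)
    qed (simp add: gball_def)
  qed
  then show ?case using Suc assms(2) by (meson finite_UN_I finite_Un finite_subset)
qed

lemma cutoff_eq_0: "2 * n \<le> gdist b x0 x \<Longrightarrow> cutoff b x0 n x = 0"
  by (cases "n = 0") (auto simp: cutoff_def divide_nonpos_pos)

lemma cutoff_edge_lipschitz:
  assumes "graph_connected b" "\<And>x y. b x y = b y x" "b x y > 0"
  shows "\<bar>cutoff b x0 n x - cutoff b x0 n y\<bar> \<le> 1 / real n"
proof -
  have clip: "\<bar>min (max s 0) 1 - min (max t 0) 1\<bar> \<le> \<bar>s - t\<bar>" for s t :: real
    by (simp add: min_def max_def)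
  have "\<bar>cutoff b x0 n x - cutoff b x0 n y\<bar>
      \<le> \<bar>(2 * real n - real (gdist b x0 x)) / real n - (2 * real n - real (gdist b x0 y)) / real n\<bar>"
    unfolding cutoff_def by (rule clip)
  also have "\<dots> = \<bar>real (gdist b x0 y) - real (gdist b x0 x)\<bar> / real n"
    by (simp add: diff_divide_distrib[symmetric] abs_divide)
  also have "\<dots> \<le> 1 / real n"
    using gdist_edge_abs_diff_le[OF assms, of x0]
    by (intro divide_right_mono) (simp_all add: abs_minus_commute)
  finally show ?thesis .
qed

lemma cutoff_edge_outside_gball:
  assumes "graph_connected b" "\<And>x y. b x y = b y x" "b x y > 0" "x \<notin> gball b x0 (2 * n)"
  shows "cutoff b x0 n y = cutoff b x0 n x"
proof -
  have "2 * n \<le> gdist b x0 x" "2 * n \<le> gdist b x0 y"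
    using assms(4) gdist_edge_le[OF assms(1), of y x x0] assms(2,3) by (auto simp: gball_def)
  then show ?thesis by (simp add: cutoff_eq_0)
qed

lemma gdeg_le_dmax:
  "finite (gball b x0 n) \<Longrightarrow> x \<in> gball b x0 n \<Longrightarrow> gdeg b x \<le> dmax b x0 n"
  unfolding dmax_def by simp

lemma weight_le_pmax:
  assumes "finite (gball b x0 n)" "x \<in> gball b x0 n"
    and "\<And>y. b x y \<ge> 0" "finite {y. b x y > 0}"
  shows "b x y \<le> pmax b x0 n"
proof -
  have "range (b x) \<subseteq> insert 0 (b x ` {y. b x y > 0})"
    using assms(3) by (auto simp: order_le_less)
  then have "finite (range (b x))"
    using assms(4) finite_subset by blast
  then have "b x y \<le> Max (range (b x))" by simp
  also have "\<dots> \<le> pmax b x0 n"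
    unfolding pmax_def using assms(1,2) by simp
  finally show ?thesis .
qed

lemma pmax_nonneg:
  assumes "finite (gball b x0 n)" "\<And>y. b x0 y \<ge> 0" "finite {y. b x0 y > 0}"
  shows "0 \<le> pmax b x0 n"
proof -
  have "x0 \<in> gball b x0 n"
    unfolding gball_def using gdist_le[of b 0 x0 x0] by simp
  then show ?thesis
    using weight_le_pmax[OF assms(1) _ assms(2,3), of x0] assms(2)[of x0] order_trans by blast
qed

lemma glap_eq_0: "(\<And>y. b x y > 0 \<Longrightarrow> \<psi> y = \<psi> x) \<Longrightarrow> glap b \<mu> \<psi> x = 0"
  unfolding glap_def by (simp add: sum.neutral)

lemma Pop_eq_0: "(\<And>y. b x y > 0 \<Longrightarrow> \<psi> y = \<psi> x) \<Longrightarrow> Pop b \<mu> \<theta> \<psi> u x = 0"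
  unfolding Pop_def by (simp add: sum.neutral)

lemma abs_mult_diff_le:
  fixes b p s t L :: real
  assumes "0 < b" "b \<le> p" "\<bar>s - t\<bar> \<le> L"
  shows "\<bar>b * (s - t)\<bar> \<le> p * L"
proof -
  have "b * \<bar>s - t\<bar> \<le> p * L"
    using assms by (intro mult_mono) auto
  then show ?thesis using assms(1) by (simp add: abs_mult)
qed

lemma abs_glap_le:
  assumes "\<mu> x > 0" "finite {y. b x y > 0}"
    and "\<And>y. b x y > 0 \<Longrightarrow> b x y \<le> p" "\<And>y. b x y > 0 \<Longrightarrow> \<bar>\<psi> x - \<psi> y\<bar> \<le> L"
  shows "\<bar>glap b \<mu> \<psi> x\<bar> \<le> real (gdeg b x) * p * L / \<mu> x"
proof -
  have "\<bar>\<Sum>y | b x y > 0. b x y * (\<psi> x - \<psi> y)\<bar> \<le> (\<Sum>y | b x y > 0. \<bar>b x y * (\<psi> x - \<psi> y)\<bar>)"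
    by (rule sum_abs)
  also have "\<dots> \<le> (\<Sum>y | b x y > 0. p * L)"
    using assms(3,4) by (intro sum_mono abs_mult_diff_le) auto
  also have "\<dots> = real (gdeg b x) * p * L"
    by (simp add: gdeg_def)
  finally show ?thesis
    using assms(1) unfolding glap_def by (simp add: abs_mult divide_right_mono)
qed

lemma norm_Pop_le:
  assumes "\<mu> x > 0" "finite {y. b x y > 0}"
    and "\<And>y. b x y > 0 \<Longrightarrow> b x y \<le> p" "\<And>y. b x y > 0 \<Longrightarrow> \<bar>\<psi> x - \<psi> y\<bar> \<le> L"
  shows "cmod (Pop b \<mu> \<theta> \<psi> u x)
    \<le> p * L / \<mu> x * (\<Sum>y | b x y > 0 \<and> \<psi> y \<noteq> \<psi> x. cmod (u x) + cmod (u y))"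
proof -
  define F where "F y = complex_of_real (b x y * (\<psi> x - \<psi> y)) *
    (u x - exp (\<i> * complex_of_real (\<theta> x y)) * u y)" for y
  have "(\<Sum>y | b x y > 0. F y) = (\<Sum>y | b x y > 0 \<and> \<psi> y \<noteq> \<psi> x. F y)"
    using assms(2) by (intro sum.mono_neutral_right) (auto simp: F_def)
  also have "cmod \<dots> \<le> (\<Sum>y | b x y > 0 \<and> \<psi> y \<noteq> \<psi> x. cmod (F y))"
    by (rule norm_sum)
  also have "\<dots> \<le> (\<Sum>y | b x y > 0 \<and> \<psi> y \<noteq> \<psi> x. p * L * (cmod (u x) + cmod (u y)))"
  proof (intro sum_mono)
    fix y assume "y \<in> {y. b x y > 0 \<and> \<psi> y \<noteq> \<psi> x}"
    then have "\<bar>b x y * (\<psi> x - \<psi> y)\<bar> \<le> p * L"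
      using assms(3,4) by (intro abs_mult_diff_le) auto
    moreover have "cmod (u x - exp (\<i> * complex_of_real (\<theta> x y)) * u y) \<le> cmod (u x) + cmod (u y)"
      using norm_triangle_ineq4[of "u x" "exp (\<i> * complex_of_real (\<theta> x y)) * u y"]
      by (simp add: norm_mult)
    ultimately show "cmod (F y) \<le> p * L * (cmod (u x) + cmod (u y))"
      unfolding F_def norm_mult norm_of_real by (intro mult_mono) auto
  qed
  finally have "cmod (\<Sum>y | b x y > 0. F y)
      \<le> p * L * (\<Sum>y | b x y > 0 \<and> \<psi> y \<noteq> \<psi> x. cmod (u x) + cmod (u y))"
    by (simp add: sum_distrib_left)
  moreover have "cmod (Pop b \<mu> \<theta> \<psi> u x) = cmod (\<Sum>y | b x y > 0. F y) / \<mu> x"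
    using assms(1) unfolding Pop_def F_def by (simp add: norm_mult norm_divide)
  ultimately show ?thesis
    using assms(1) by (simp add: divide_right_mono)
qed

lemma sq_norm_Pop_le:
  assumes "0 < \<mu>0" "\<mu>0 \<le> \<mu> x" "finite {y. b x y > 0}"
    and "\<And>y. b x y > 0 \<Longrightarrow> b x y \<le> p" "\<And>y. b x y > 0 \<Longrightarrow> \<bar>\<psi> x - \<psi> y\<bar> \<le> L"
  shows "\<mu> x * (cmod (Pop b \<mu> \<theta> \<psi> u x))\<^sup>2
    \<le> (p * L)\<^sup>2 / \<mu>0 * (\<Sum>y | b x y > 0 \<and> \<psi> y \<noteq> \<psi> x. cmod (u x) + cmod (u y))\<^sup>2"
proof -
  define A where "A = (\<Sum>y | b x y > 0 \<and> \<psi> y \<noteq> \<psi> x. cmod (u x) + cmod (u y))"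
  have mu_pos: "\<mu> x > 0"
    using assms(1,2) by linarith
  have "cmod (Pop b \<mu> \<theta> \<psi> u x) \<le> p * L / \<mu> x * A"
    unfolding A_def using mu_pos assms(3-5) by (rule norm_Pop_le)
  then have "(cmod (Pop b \<mu> \<theta> \<psi> u x))\<^sup>2 \<le> (p * L / \<mu> x * A)\<^sup>2"
    by (intro power_mono) auto
  then have "\<mu> x * (cmod (Pop b \<mu> \<theta> \<psi> u x))\<^sup>2 \<le> (p * L)\<^sup>2 / \<mu> x * A\<^sup>2"
    using mu_pos by (simp add: field_simps power2_eq_square)
  also have "\<dots> \<le> (p * L)\<^sup>2 / \<mu>0 * A\<^sup>2"
    using assms(1) mu_pos by (intro mult_right_mono divide_left_mono[OF assms(2)]) simp_all
  finally show ?thesis unfolding A_def .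
qed

lemma sum_sum_neighbours_swap:
  assumes "finite S" "\<And>x y. R x y \<Longrightarrow> R y x" "\<And>x y. R x y \<Longrightarrow> x \<in> S"
  shows "(\<Sum>x\<in>S. \<Sum>y | R x y. f y) = (\<Sum>x\<in>S. real (card {y. R x y}) * f x)"
proof -
  have nbhd: "{y. R x y} = {y\<in>S. R x y}" for x
    using assms(2,3) by blast
  have "(\<Sum>x\<in>S. \<Sum>y | R x y. f y) = (\<Sum>x\<in>S. \<Sum>y\<in>S. if R x y then f y else 0)"
    unfolding nbhd using assms(1) by (simp add: sum.inter_filter)
  also have "\<dots> = (\<Sum>y\<in>S. \<Sum>x\<in>S. if R y x then f y else 0)"
    using assms(2) by (subst sum.swap) (auto intro!: sum.cong)
  also have "\<dots> = (\<Sum>x\<in>S. real (card {y. R x y}) * f x)"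
    unfolding nbhd using assms(1) by (simp add: sum.inter_filter[symmetric])
  finally show ?thesis .
qed

lemma sum_square_neighbour_sums_le:
  fixes v :: "'a \<Rightarrow> real"
  assumes "finite S" "\<And>x y. R x y \<Longrightarrow> R y x" "\<And>x y. R x y \<Longrightarrow> x \<in> S"
    and "\<And>x. x \<in> S \<Longrightarrow> card {y. R x y} \<le> d"
  shows "(\<Sum>x\<in>S. (\<Sum>y | R x y. v x + v y)\<^sup>2) \<le> (2 * real d)\<^sup>2 * (\<Sum>x\<in>S. (v x)\<^sup>2)"
proof -
  define N where "N x = {y. R x y}" for x
  have "(\<Sum>y\<in>N x. v x + v y)\<^sup>2 \<le> real d * (\<Sum>y\<in>N x. 2 * ((v x)\<^sup>2 + (v y)\<^sup>2))"
    if "x \<in> S" for x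
  proof -
    have "(\<Sum>y\<in>N x. v x + v y)\<^sup>2 \<le> real (card (N x)) * (\<Sum>y\<in>N x. (v x + v y)\<^sup>2)"
      using sum_squared_le_sum_of_squares by (simp add: mult.commute)
    also have "\<dots> \<le> real d * (\<Sum>y\<in>N x. 2 * ((v x)\<^sup>2 + (v y)\<^sup>2))"
    proof (rule mult_mono)
      show "(\<Sum>y\<in>N x. (v x + v y)\<^sup>2) \<le> (\<Sum>y\<in>N x. 2 * ((v x)\<^sup>2 + (v y)\<^sup>2))"
      proof (rule sum_mono)
        fix y show "(v x + v y)\<^sup>2 \<le> 2 * ((v x)\<^sup>2 + (v y)\<^sup>2)"
          using sum_squares_bound[of "v x" "v y"] unfolding power2_sum by simp
      qed
    qed (use assms(4) that in \<open>auto simp: N_def intro: sum_nonneg\<close>)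
    finally show ?thesis .
  qed
  then have "(\<Sum>x\<in>S. (\<Sum>y\<in>N x. v x + v y)\<^sup>2)
      \<le> (\<Sum>x\<in>S. real d * (\<Sum>y\<in>N x. 2 * ((v x)\<^sup>2 + (v y)\<^sup>2)))"
    by (rule sum_mono)
  also have "\<dots> = 2 * real d * ((\<Sum>x\<in>S. \<Sum>y\<in>N x. (v x)\<^sup>2) + (\<Sum>x\<in>S. \<Sum>y\<in>N x. (v y)\<^sup>2))"
    by (simp add: sum_distrib_left sum.distrib distrib_left mult_ac)
  also have "\<dots> = 4 * real d * (\<Sum>x\<in>S. real (card (N x)) * (v x)\<^sup>2)"
    using sum_sum_neighbours_swap[OF assms(1-3)] by (simp add: N_def)
  also have "\<dots> \<le> 4 * real d * (\<Sum>x\<in>S. real d * (v x)\<^sup>2)"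
    using assms(4) by (intro mult_left_mono sum_mono mult_right_mono) (auto simp: N_def)
  also have "\<dots> = (2 * real d)\<^sup>2 * (\<Sum>x\<in>S. (v x)\<^sup>2)"
    by (simp add: sum_distrib_left power2_eq_square mult_ac)
  finally show ?thesis unfolding N_def .
qed

lemma l2norm_le_if_finite_support:
  assumes "finite S" "\<And>x. x \<notin> S \<Longrightarrow> f x = 0" "in_l2 \<mu> u" "\<And>x. \<mu> x \<ge> 0" "c \<ge> 0"
    and "(\<Sum>x\<in>S. \<mu> x * (cmod (f x))\<^sup>2) \<le> c\<^sup>2 * (\<Sum>x\<in>S. \<mu> x * (cmod (u x))\<^sup>2)"
  shows "in_l2 \<mu> f \<and> l2norm \<mu> f \<le> c * l2norm \<mu> u"
proof -
  have "((\<lambda>x. \<mu> x * (cmod (f x))\<^sup>2) has_sum (\<Sum>x\<in>S. \<mu> x * (cmod (f x))\<^sup>2)) UNIV"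
    using assms(1,2) by (intro has_sum_finite_neutralI) auto
  then have f_l2: "in_l2 \<mu> f" and f_eq: "l2norm \<mu> f = sqrt (\<Sum>x\<in>S. \<mu> x * (cmod (f x))\<^sup>2)"
    unfolding in_l2_def l2norm_def by (auto dest: has_sum_imp_summable infsumI)
  have "(\<Sum>x\<in>S. \<mu> x * (cmod (u x))\<^sup>2) \<le> (\<Sum>\<^sub>\<infinity>x. \<mu> x * (cmod (u x))\<^sup>2)"
    using assms(1,3,4) unfolding in_l2_def by (intro finite_sum_le_infsum) auto
  then have "(\<Sum>x\<in>S. \<mu> x * (cmod (f x))\<^sup>2) \<le> c\<^sup>2 * (\<Sum>\<^sub>\<infinity>x. \<mu> x * (cmod (u x))\<^sup>2)"
    using assms(6) by (meson mult_left_mono order_trans zero_le_power2)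
  then have "sqrt (\<Sum>x\<in>S. \<mu> x * (cmod (f x))\<^sup>2) \<le> sqrt (c\<^sup>2 * (\<Sum>\<^sub>\<infinity>x. \<mu> x * (cmod (u x))\<^sup>2))"
    by (rule real_sqrt_le_mono)
  then show ?thesis
    unfolding f_eq using f_l2 assms(5) by (simp add: real_sqrt_mult l2norm_def)
qed

lemma l2norm_mult_glap_le:
  assumes "finite S" "\<mu>0 > 0" "\<And>x. \<mu>0 \<le> \<mu> x" "\<And>x. finite {y. b x y > 0}"
    and "\<And>x. x \<in> S \<Longrightarrow> gdeg b x \<le> d" "\<And>x y. x \<in> S \<Longrightarrow> b x y \<le> p" "0 \<le> p"
    and "\<And>x y. b x y > 0 \<Longrightarrow> \<bar>\<psi> x - \<psi> y\<bar> \<le> L" "0 \<le> L"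
    and "\<And>x y. b x y > 0 \<Longrightarrow> x \<notin> S \<Longrightarrow> \<psi> y = \<psi> x"
    and "in_l2 \<mu> u"
  shows "in_l2 \<mu> (\<lambda>x. u x * complex_of_real (glap b \<mu> \<psi> x))
    \<and> l2norm \<mu> (\<lambda>x. u x * complex_of_real (glap b \<mu> \<psi> x)) \<le> real d * p * L / \<mu>0 * l2norm \<mu> u"
proof -
  define \<beta> where "\<beta> = real d * p * L / \<mu>0"
  have mu_pos: "\<mu> x > 0" for x
    using assms(2,3) less_le_trans by blast
  have glap_le: "\<bar>glap b \<mu> \<psi> x\<bar> \<le> \<beta>" if "x \<in> S" for x
  proof -
    have "\<bar>glap b \<mu> \<psi> x\<bar> \<le> real (gdeg b x) * p * L / \<mu> x"
      using that by (intro abs_glap_le mu_pos assms(4,6,8))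
    also have "\<dots> \<le> \<beta>"
      unfolding \<beta>_def using that assms(2,3,5,7,9)
      by (intro frac_le mult_right_mono) auto
    finally show ?thesis .
  qed
  have "\<mu> x * (cmod (u x * complex_of_real (glap b \<mu> \<psi> x)))\<^sup>2 \<le> \<beta>\<^sup>2 * (\<mu> x * (cmod (u x))\<^sup>2)"
    if "x \<in> S" for x
  proof -
    have "(glap b \<mu> \<psi> x)\<^sup>2 \<le> \<beta>\<^sup>2"
      using glap_le[OF that] abs_le_square_iff by fastforce
    then have "(cmod (u x))\<^sup>2 * (glap b \<mu> \<psi> x)\<^sup>2 \<le> \<beta>\<^sup>2 * (cmod (u x))\<^sup>2"
      by (subst mult.commute) (rule mult_right_mono, simp_all)
    then show ?thesis
      using mu_pos[of x] by (simp add: norm_mult power_mult_distrib)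
  qed
  then have "(\<Sum>x\<in>S. \<mu> x * (cmod (u x * complex_of_real (glap b \<mu> \<psi> x)))\<^sup>2)
      \<le> \<beta>\<^sup>2 * (\<Sum>x\<in>S. \<mu> x * (cmod (u x))\<^sup>2)"
    unfolding sum_distrib_left by (rule sum_mono)
  moreover have "glap b \<mu> \<psi> x = 0" if "x \<notin> S" for x
    using assms(10) that by (intro glap_eq_0)
  moreover have "\<beta> \<ge> 0"
    unfolding \<beta>_def using assms(2,7,9) by simp
  ultimately show ?thesis
    unfolding \<beta>_def using assms(1,11) mu_pos less_imp_le
    by (intro l2norm_le_if_finite_support) auto
qed

lemma l2norm_Pop_le:
  assumes "finite S" "\<mu>0 > 0" "\<And>x. \<mu>0 \<le> \<mu> x" "\<And>x. finite {y. b x y > 0}" "\<And>x y. b x y = b y x"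
    and "\<And>x. x \<in> S \<Longrightarrow> gdeg b x \<le> d" "\<And>x y. x \<in> S \<Longrightarrow> b x y \<le> p" "0 \<le> p"
    and "\<And>x y. b x y > 0 \<Longrightarrow> \<bar>\<psi> x - \<psi> y\<bar> \<le> L" "0 \<le> L"
    and "\<And>x y. b x y > 0 \<Longrightarrow> x \<notin> S \<Longrightarrow> \<psi> y = \<psi> x"
    and "in_l2 \<mu> u"
  shows "in_l2 \<mu> (Pop b \<mu> \<theta> \<psi> u)
    \<and> l2norm \<mu> (Pop b \<mu> \<theta> \<psi> u) \<le> 2 * (real d * p * L / \<mu>0) * l2norm \<mu> u"
proof -
  define R where "R x y \<longleftrightarrow> b x y > 0 \<and> \<psi> y \<noteq> \<psi> x" for x y
  define a where "a x = cmod (u x)" for x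
  define A where "A x = (\<Sum>y | R x y. a x + a y)" for x
  have mu_pos: "\<mu> x > 0" for x
    using assms(2,3) less_le_trans by blast
  have R_sym: "R x y \<Longrightarrow> R y x" for x y
    unfolding R_def using assms(5)[of x y] by auto
  have R_in_S: "R x y \<Longrightarrow> x \<in> S" for x y
    unfolding R_def using assms(11)[of x y] by auto
  have card_R: "card {y. R x y} \<le> d" if "x \<in> S" for x
    using card_mono[OF assms(4), of "{y. R x y}" x] assms(6)[OF that]
    unfolding R_def gdeg_def by fastforce
  have Pop_sq_le: "\<mu> x * (cmod (Pop b \<mu> \<theta> \<psi> u x))\<^sup>2 \<le> (p * L)\<^sup>2 / \<mu>0 * (A x)\<^sup>2"
    if "x \<in> S" for x
    unfolding A_def R_def a_def using that by (intro sq_norm_Pop_le assms(2-4,7,9))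
  have a_sq_le: "(a x)\<^sup>2 \<le> \<mu> x * (cmod (u x))\<^sup>2 / \<mu>0" for x
    unfolding a_def using assms(2) mult_right_mono[OF assms(3)[of x] zero_le_power2[of "cmod (u x)"]]
    by (simp add: le_divide_eq mult.commute)
  have "(\<Sum>x\<in>S. \<mu> x * (cmod (Pop b \<mu> \<theta> \<psi> u x))\<^sup>2) \<le> (\<Sum>x\<in>S. (p * L)\<^sup>2 / \<mu>0 * (A x)\<^sup>2)"
    using Pop_sq_le by (rule sum_mono)
  also have "\<dots> = (p * L)\<^sup>2 / \<mu>0 * (\<Sum>x\<in>S. (A x)\<^sup>2)"
    by (simp add: sum_distrib_left)
  also have "\<dots> \<le> (p * L)\<^sup>2 / \<mu>0 * ((2 * real d)\<^sup>2 * (\<Sum>x\<in>S. (a x)\<^sup>2))"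
    using sum_square_neighbour_sums_le[OF assms(1) R_sym R_in_S card_R, where v = a] assms(2)
    unfolding A_def by (intro mult_left_mono) simp_all
  also have "\<dots> \<le> (p * L)\<^sup>2 / \<mu>0 * ((2 * real d)\<^sup>2 * (\<Sum>x\<in>S. \<mu> x * (cmod (u x))\<^sup>2 / \<mu>0))"
    using a_sq_le assms(2) by (intro mult_left_mono sum_mono) auto
  also have "\<dots> = (2 * (real d * p * L / \<mu>0))\<^sup>2 * (\<Sum>x\<in>S. \<mu> x * (cmod (u x))\<^sup>2)"
    by (simp add: sum_divide_distrib[symmetric] power2_eq_square)
  finally have "(\<Sum>x\<in>S. \<mu> x * (cmod (Pop b \<mu> \<theta> \<psi> u x))\<^sup>2)
    \<le> (2 * (real d * p * L / \<mu>0))\<^sup>2 * (\<Sum>x\<in>S. \<mu> x * (cmod (u x))\<^sup>2)" .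
  moreover have "Pop b \<mu> \<theta> \<psi> u x = 0" if "x \<notin> S" for x
    using assms(11) that by (intro Pop_eq_0)
  ultimately show ?thesis
    using assms(1,2,8,10,12) mu_pos less_imp_le
    by (intro l2norm_le_if_finite_support) auto
qed

theorem lemma5p2:
  fixes b :: "'a \<Rightarrow> 'a \<Rightarrow> real" and \<mu> :: "'a \<Rightarrow> real" and \<theta> :: "'a \<Rightarrow> 'a \<Rightarrow> real"
    and \<mu>0 :: real and x0 :: 'a and n :: nat and u :: "'a \<Rightarrow> complex"
  assumes countV: "countable (UNIV :: 'a set)" and infV: "infinite (UNIV :: 'a set)"
    and b_nonneg: "\<And>x y. b x y \<ge> 0"
    and b_sym: "\<And>x y. b x y = b y x"
    and b_diag: "\<And>x. b x x = 0"
    and loc_fin: "\<And>x. finite {y. b x y > 0}"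
    and conn: "graph_connected b"
    and mu_pos: "\<And>x. \<mu> x > 0"
    and mu0_pos: "\<mu>0 > 0" and mu_ge: "\<And>x. \<mu> x \<ge> \<mu>0"
    and theta_range: "\<And>x y. - pi \<le> \<theta> x y \<and> \<theta> x y \<le> pi"
    and theta_anti: "\<And>x y. \<theta> x y = - \<theta> y x"
    and n_pos: "n \<ge> 1"
    and u_l2: "in_l2 \<mu> u"
  shows "let \<beta> = real (dmax b x0 (2 * n)) * pmax b x0 (2 * n) / (\<mu>0 * real n) in
     in_l2 \<mu> (Pop b \<mu> \<theta> (cutoff b x0 n) u)
     \<and> l2norm \<mu> (Pop b \<mu> \<theta> (cutoff b x0 n) u) \<le> 2 * \<beta> * l2norm \<mu> u
     \<and> in_l2 \<mu> (\<lambda>x. u x * complex_of_real (glap b \<mu> (cutoff b x0 n) x))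
     \<and> l2norm \<mu> (\<lambda>x. u x * complex_of_real (glap b \<mu> (cutoff b x0 n) x)) \<le> \<beta> * l2norm \<mu> u"
proof -
  define S where "S = gball b x0 (2 * n)"
  define d where "d = dmax b x0 (2 * n)"
  define p where "p = pmax b x0 (2 * n)"
  have fin_S: "finite S"
    unfolding S_def using conn loc_fin by (rule finite_gball)
  have deg_le: "gdeg b x \<le> d" if "x \<in> S" for x
    using fin_S that unfolding S_def d_def by (rule gdeg_le_dmax)
  have weight_le: "b x y \<le> p" if "x \<in> S" for x y
    using fin_S that b_nonneg loc_fin unfolding S_def p_def by (rule weight_le_pmax)
  have p_nonneg: "0 \<le> p"
    unfolding p_def using finite_gball[OF conn loc_fin] b_nonneg loc_fin by (rule pmax_nonneg)
  have cutoff_lip: "\<bar>cutoff b x0 n x - cutoff b x0 n y\<bar> \<le> 1 / real n" if "b x y > 0" for x y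
    using conn b_sym that by (rule cutoff_edge_lipschitz)
  have cutoff_const: "cutoff b x0 n y = cutoff b x0 n x" if "b x y > 0" "x \<notin> S" for x y
    using conn b_sym that unfolding S_def by (rule cutoff_edge_outside_gball)
  have \<beta>_eq: "real d * p / (\<mu>0 * real n) = real d * p * (1 / real n) / \<mu>0"
    by simp
  show ?thesis
    unfolding Let_def d_def[symmetric] p_def[symmetric] \<beta>_eq
    using l2norm_Pop_le[where \<psi> = "cutoff b x0 n" and \<theta> = \<theta>,
        OF fin_S mu0_pos mu_ge loc_fin b_sym deg_le weight_le p_nonneg cutoff_lip _ cutoff_const u_l2]
      l2norm_mult_glap_le[where \<psi> = "cutoff b x0 n",
        OF fin_S mu0_pos mu_ge loc_fin deg_le weight_le p_nonneg cutoff_lip _ cutoff_const u_l2]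
    by simp
qed

end
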